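(* If $p>2$ is a prime, then $P(p,2p)=P(p,p)=pO(p)$.
   Context: $O(p)$ is the multiplicative order of $2$ modulo $p$. For positive integers $m,n$, let $\mathbf{Z}_m$ be the integers modulo $m$ and $T:\mathbf{Z}_m^n\to\mathbf{Z}_m^n$, $T(a_0,\dots,a_{n-1})=(a_0+a_1,a_1+a_2,\dots,a_{n-1}+a_0)$. For $\mathbf{a}\in\mathbf{Z}_m^n$ the cycle length of $(T^k\mathbf{a})_{k\ge0}$ is the smallest positive integer $P$ such that there is $N$ with $T^{k+P}\mathbf{a}=T^k\mathbf{a}$ for all $k\ge N$. $P(m,n)$ denotes the maximum of these cycle lengths over all $\mathbf{a}\in\mathbf{Z}_m^n$. *)

theory Defs
  imports "HOL-Number_Theory.Number_Theory"
begin

definition vecs :: "nat \<Rightarrow> nat \<Rightarrow> nat list set" where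
  "vecs m n = {xs. length xs = n \<and> (\<forall>x\<in>set xs. x < m)}"

definition Tmap :: "nat \<Rightarrow> nat \<Rightarrow> nat list \<Rightarrow> nat list" where
  "Tmap m n xs = map (\<lambda>i. (xs ! i + xs ! ((i + 1) mod n)) mod m) [0..<n]"

definition cycle_len :: "nat \<Rightarrow> nat \<Rightarrow> nat list \<Rightarrow> nat" where
  "cycle_len m n a = (LEAST P. 0 < P \<and>
     (\<exists>N. \<forall>k\<ge>N. (Tmap m n ^^ (k + P)) a = (Tmap m n ^^ k) a))"

definition Pmax :: "nat \<Rightarrow> nat \<Rightarrow> nat" where
  "Pmax m n = Max (cycle_len m n ` vecs m n)"

end

theory Submission
  imports Defs
begin

text \<open>Iterating T gives (T^k a)_i = \<Sum>_j (k choose j) a_{i+j}, and since p divides the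
inner binomial coefficients of row p, over Z_p the map T^p is a_i \<mapsto> a_i + a_{i+p}. When
n = p, or n = 2p after p preliminary steps, the vector is invariant under the shift by p,
so T^p acts as multiplication by 2 and T^{p ord_p(2)} is the identity. Conversely the unit
vector e_0 of (Z_p)^p has cycle length exactly p ord_p(2): a period P = pq + r with
0 < r < p would put the entry 2^q \<noteq> 0 at position p - r where e_0 has 0, and for r = 0
the first entry forces 2^q = 1. The orbit of e_0 @ e_0 in (Z_p)^{2p} is that of e_0
duplicated, which transfers the lower bound to n = 2p.\<close>

definition eventual_period :: "('a \<Rightarrow> 'a) \<Rightarrow> nat \<Rightarrow> 'a \<Rightarrow> bool" where
  "eventual_period f P x \<longleftrightarrow> (\<exists>N. \<forall>k\<ge>N. (f ^^ (k + P)) x = (f ^^ k) x)"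

lemma eventual_periodI:
  assumes "(f ^^ P) ((f ^^ N) x) = (f ^^ N) x"
  shows "eventual_period f P x"
  unfolding eventual_period_def
proof (intro exI allI impI)
  fix k assume "N \<le> k"
  then obtain d where k: "k = d + N" using le_iff_add by (metis add.commute)
  have "k + P = d + (P + N)" using k by simp
  then have "(f ^^ (k + P)) x = (f ^^ d) ((f ^^ P) ((f ^^ N) x))"
    by (simp only: funpow_add comp_def)
  also have "\<dots> = (f ^^ k) x"
    unfolding k assms by (simp add: funpow_add)
  finally show "(f ^^ (k + P)) x = (f ^^ k) x" .
qed

lemma funpow_mult_fixpoint:
  assumes "(f ^^ Q) x = x"
  shows "(f ^^ (Q * c)) x = x"
  by (induction c) (simp_all add: funpow_add assms)

lemma eventual_period_fixpoint:
  assumes Q_fix: "(f ^^ Q) x = x" and "0 < Q" and "eventual_period f P x"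
  shows "(f ^^ P) x = x"
proof -
  obtain N where N: "\<forall>k\<ge>N. (f ^^ (k + P)) x = (f ^^ k) x"
    using assms(3) by (auto simp: eventual_period_def)
  have "N \<le> Q * N" using \<open>0 < Q\<close> by simp
  have "(f ^^ P) x = (f ^^ P) ((f ^^ (Q * N)) x)"
    by (simp add: funpow_mult_fixpoint Q_fix)
  also have "\<dots> = (f ^^ (Q * N + P)) x"
    by (simp add: funpow_add add.commute)
  also have "\<dots> = x"
    using N \<open>N \<le> Q * N\<close> by (simp add: funpow_mult_fixpoint Q_fix)
  finally show ?thesis .
qed

lemma cycle_len_eq_Least:
  "cycle_len m n a = (LEAST P. 0 < P \<and> eventual_period (Tmap m n) P a)"
  by (simp add: cycle_len_def eventual_period_def)

lemma cycle_len_le: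
  "0 < P \<Longrightarrow> eventual_period (Tmap m n) P a \<Longrightarrow> cycle_len m n a \<le> P"
  unfolding cycle_len_eq_Least by (rule Least_le) simp

lemma cycle_len_eqI:
  assumes "0 < Q" "eventual_period (Tmap m n) Q a"
    and "\<And>P. 0 < P \<Longrightarrow> eventual_period (Tmap m n) P a \<Longrightarrow> Q dvd P"
  shows "cycle_len m n a = Q"
  unfolding cycle_len_eq_Least
  by (rule Least_equality) (use assms in \<open>auto intro: dvd_imp_le\<close>)

lemma finite_vecs: "finite (vecs m n)"
proof (rule finite_subset)
  show "vecs m n \<subseteq> {xs. set xs \<subseteq> {0..<m} \<and> length xs = n}"
    by (auto simp: vecs_def)
qed (rule finite_lists_length_eq, simp)

lemma Pmax_eqI:
  assumes "0 < Q" and "\<forall>b\<in>vecs m n. eventual_period (Tmap m n) Q b"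
    and "a \<in> vecs m n" and "cycle_len m n a = Q"
  shows "Pmax m n = Q"
  unfolding Pmax_def
proof (rule Max_eqI)
  show "finite (cycle_len m n ` vecs m n)" by (simp add: finite_vecs)
  show "Q \<in> cycle_len m n ` vecs m n" using assms(3,4) by force
qed (use assms(1,2) cycle_len_le in blast)

lemma length_Tmap [simp]: "length (Tmap m n xs) = n"
  by (simp add: Tmap_def)

lemma nth_Tmap: "i < n \<Longrightarrow> Tmap m n xs ! i = (xs ! i + xs ! ((i + 1) mod n)) mod m"
  by (simp add: Tmap_def)

lemma length_funpow_Tmap [simp]:
  "length ((Tmap m n ^^ k) xs) = (if k = 0 then length xs else n)"
  by (induction k) auto

lemma Tmap_in_vecs: "xs \<in> vecs m n \<Longrightarrow> 0 < n \<Longrightarrow> Tmap m n xs \<in> vecs m n"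
  by (cases m) (auto simp: vecs_def Tmap_def)

lemma funpow_Tmap_in_vecs: "xs \<in> vecs m n \<Longrightarrow> 0 < n \<Longrightarrow> (Tmap m n ^^ k) xs \<in> vecs m n"
  by (induction k) (auto simp: Tmap_in_vecs)

lemma sum_choose_Suc_shift:
  fixes g :: "nat \<Rightarrow> nat"
  shows "(\<Sum>j\<le>k. (k choose j) * (g j + g (Suc j))) = (\<Sum>j\<le>Suc k. (Suc k choose j) * g j)"
proof -
  have "(\<Sum>j\<le>k. (k choose j) * g j) = (\<Sum>j\<le>Suc k. (k choose j) * g j)"
    by simp
  also have "\<dots> = g 0 + (\<Sum>j\<le>k. (k choose Suc j) * g (Suc j))"
    by (subst sum.atMost_Suc_shift) simp
  finally show ?thesis
    by (subst sum.atMost_Suc_shift) (simp add: algebra_simps sum.distrib)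
qed

lemma sum_mult_mod_right:
  fixes c a :: "nat \<Rightarrow> nat"
  shows "(\<Sum>j\<in>A. c j * (a j mod m)) mod m = (\<Sum>j\<in>A. c j * a j) mod m"
proof -
  have "(\<Sum>j\<in>A. c j * (a j mod m)) mod m = (\<Sum>j\<in>A. c j * (a j mod m) mod m) mod m"
    by (simp add: mod_sum_eq)
  also have "\<dots> = (\<Sum>j\<in>A. c j * a j mod m) mod m"
    by (simp add: mod_mult_right_eq)
  finally show ?thesis
    by (simp add: mod_sum_eq)
qed

lemma nth_funpow_Tmap:
  assumes "xs \<in> vecs m n" "i < n"
  shows "(Tmap m n ^^ k) xs ! i = (\<Sum>j\<le>k. (k choose j) * xs ! ((i + j) mod n)) mod m"
  using assms
proof (induction k arbitrary: xs)
  case 0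
  then show ?case by (auto simp: vecs_def)
next
  case (Suc k)
  have n: "0 < n" using Suc.prems by simp
  have "(Tmap m n ^^ Suc k) xs ! i = (Tmap m n ^^ k) (Tmap m n xs) ! i"
    by (simp add: funpow_Suc_right del: funpow.simps)
  also have "\<dots> = (\<Sum>j\<le>k. (k choose j) * Tmap m n xs ! ((i + j) mod n)) mod m"
    using Suc n by (simp add: Tmap_in_vecs)
  also have "\<dots> = (\<Sum>j\<le>k. (k choose j) *
      ((xs ! ((i + j) mod n) + xs ! ((i + Suc j) mod n)) mod m)) mod m"
    using n by (simp add: nth_Tmap mod_Suc_eq add.assoc)
  also have "\<dots> = (\<Sum>j\<le>k. (k choose j) * (xs ! ((i + j) mod n) + xs ! ((i + Suc j) mod n))) mod m"
    by (rule sum_mult_mod_right)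
  also have "\<dots> = (\<Sum>j\<le>Suc k. (Suc k choose j) * xs ! ((i + j) mod n)) mod m"
    using sum_choose_Suc_shift[of k "\<lambda>j. xs ! ((i + j) mod n)"] by simp
  finally show ?case .
qed

lemma nth_funpow_Tmap_prime:
  assumes "prime p" "xs \<in> vecs p n" "i < n"
  shows "(Tmap p n ^^ p) xs ! i = (xs ! i + xs ! ((i + p) mod n)) mod p"
proof -
  define g where "g j = xs ! ((i + j) mod n)" for j
  have "(Tmap p n ^^ p) xs ! i = (\<Sum>j\<le>p. (p choose j) * g j mod p) mod p"
    using nth_funpow_Tmap[OF assms(2,3)] by (simp add: g_def mod_sum_eq)
  also have "(\<Sum>j\<le>p. (p choose j) * g j mod p) = (\<Sum>j\<in>{0,p}. (p choose j) * g j mod p)"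
  proof (rule sum.mono_neutral_right)
    show "\<forall>j\<in>{..p} - {0, p}. (p choose j) * g j mod p = 0"
      using assms(1) by (auto simp: dvd_choose_prime)
  qed auto
  also have "\<dots> = g 0 mod p + g p mod p"
    using prime_gt_0_nat[OF assms(1)] by simp
  finally show ?thesis
    using assms(3) by (simp add: g_def mod_add_eq)
qed

lemma nth_append_self: "length xs = n \<Longrightarrow> i < 2 * n \<Longrightarrow> (xs @ xs) ! i = xs ! (i mod n)"
  by (cases "i < n") (auto simp: nth_append le_mod_geq)

lemma Tmap_append_self:
  assumes "length xs = n"
  shows "Tmap m (2 * n) (xs @ xs) = Tmap m n xs @ Tmap m n xs"
proof (rule nth_equalityI)
  fix i assume "i < length (Tmap m (2 * n) (xs @ xs))"
  then have i: "i < 2 * n" by simp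
  then have "(i + 1) mod (2 * n) mod n = (i mod n + 1) mod n"
    by (simp add: mod_mod_cancel mod_Suc_eq)
  then show "Tmap m (2 * n) (xs @ xs) ! i = (Tmap m n xs @ Tmap m n xs) ! i"
    using i assms by (simp add: nth_Tmap nth_append_self)
qed simp

lemma funpow_Tmap_append_self:
  assumes "length xs = n" "0 < n"
  shows "(Tmap m (2 * n) ^^ k) (xs @ xs) = (Tmap m n ^^ k) xs @ (Tmap m n ^^ k) xs"
  by (induction k) (use assms in \<open>simp_all add: Tmap_append_self\<close>)

lemma cycle_len_append_self:
  assumes "length xs = n" "0 < n"
  shows "cycle_len m (2 * n) (xs @ xs) = cycle_len m n xs"
proof -
  have "eventual_period (Tmap m (2 * n)) P (xs @ xs) \<longleftrightarrow> eventual_period (Tmap m n) P xs" for P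
    using assms by (simp add: eventual_period_def funpow_Tmap_append_self)
  then show ?thesis
    by (simp add: cycle_len_eq_Least)
qed

definition shift_invariant :: "nat \<Rightarrow> nat \<Rightarrow> nat list \<Rightarrow> bool" where
  "shift_invariant d n xs \<longleftrightarrow> (\<forall>i<n. xs ! ((i + d) mod n) = xs ! i)"

lemma shift_invariant_self: "shift_invariant n n xs"
  by (simp add: shift_invariant_def)

lemma shift_invariant_map:
  "length xs = n \<Longrightarrow> shift_invariant d n xs \<Longrightarrow> shift_invariant d n (map f xs)"
  by (cases n) (auto simp: shift_invariant_def)

lemma shift_invariant_funpow_Tmap_prime:
  assumes "prime p" "xs \<in> vecs p (2 * p)"
  shows "shift_invariant p (2 * p) ((Tmap p (2 * p) ^^ p) xs)"
  unfolding shift_invariant_def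
proof (intro allI impI)
  fix i assume i: "i < 2 * p"
  then have "((i + p) mod (2 * p) + p) mod (2 * p) = i"
    by (metis mod_add_left_eq add.assoc mult_2 mod_add_self2 mod_less)
  then show "(Tmap p (2 * p) ^^ p) xs ! ((i + p) mod (2 * p)) = (Tmap p (2 * p) ^^ p) xs ! i"
    using i assms nth_funpow_Tmap_prime[OF assms] by (simp add: add.commute)
qed

lemma funpow_Tmap_prime_doubles:
  assumes "prime p" "xs \<in> vecs p n" "shift_invariant p n xs"
  shows "(Tmap p n ^^ p) xs = map (\<lambda>x. 2 * x mod p) xs"
  using assms nth_funpow_Tmap_prime[OF assms(1,2)] prime_gt_0_nat[OF assms(1)]
  by (intro nth_equalityI) (auto simp: vecs_def shift_invariant_def mult_2)

lemma funpow_Tmap_prime_mult: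
  assumes "prime p" "xs \<in> vecs p n" "shift_invariant p n xs"
  shows "(Tmap p n ^^ (p * q)) xs = map (\<lambda>x. 2 ^ q * x mod p) xs"
proof (induction q)
  case 0
  then show ?case using assms(2) by (auto simp: vecs_def intro: nth_equalityI)
next
  case (Suc q)
  have p: "0 < p" using prime_gt_0_nat[OF assms(1)] .
  have "map (\<lambda>x. 2 ^ q * x mod p) xs \<in> vecs p n"
    using assms(2) p by (auto simp: vecs_def)
  moreover have "shift_invariant p n (map (\<lambda>x. 2 ^ q * x mod p) xs)"
    using assms(2,3) by (auto simp: vecs_def intro: shift_invariant_map)
  ultimately have "(Tmap p n ^^ (p * Suc q)) xs = map (\<lambda>x. 2 * x mod p) (map (\<lambda>x. 2 ^ q * x mod p) xs)"
    using funpow_Tmap_prime_doubles[OF assms(1)] Suc by (simp add: funpow_add)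
  then show ?case
    by (simp add: mod_mult_right_eq mult.assoc)
qed

lemma funpow_Tmap_order:
  assumes "prime p" "xs \<in> vecs p n" "shift_invariant p n xs" "[2 ^ q = 1] (mod p)"
  shows "(Tmap p n ^^ (p * q)) xs = xs"
proof -
  have "2 ^ q * x mod p = x" if "x < p" for x
    using assms(4) that by (metis cong_def mod_mult_left_eq mod_less mult_1 prime_gt_1_nat[OF assms(1)])
  then show ?thesis
    using assms(2) by (simp add: funpow_Tmap_prime_mult[OF assms(1-3)] vecs_def map_idI)
qed

definition unit_vec :: "nat \<Rightarrow> nat list" where
  "unit_vec n = map (\<lambda>i. if i = 0 then 1 else 0) [0..<n]"

lemma nth_unit_vec: "i < n \<Longrightarrow> unit_vec n ! i = (if i = 0 then 1 else 0)"
  by (simp add: unit_vec_def)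

lemma unit_vec_in_vecs: "1 < m \<Longrightarrow> unit_vec n \<in> vecs m n"
  by (auto simp: unit_vec_def vecs_def)

lemma nth_funpow_Tmap_unit_vec:
  assumes "1 < m" "0 < r" "r < n"
  shows "(Tmap m n ^^ r) (unit_vec n) ! (n - r) = 1"
proof -
  have "(\<Sum>j\<le>r. (r choose j) * unit_vec n ! ((n - r + j) mod n)) = (\<Sum>j\<le>r. if j = r then 1 else 0)"
  proof (rule sum.cong)
    fix j assume "j \<in> {..r}"
    then show "(r choose j) * unit_vec n ! ((n - r + j) mod n) = (if j = r then 1 else 0)"
      using assms by (cases "j = r") (auto simp: nth_unit_vec)
  qed simp
  then show ?thesis
    using nth_funpow_Tmap[OF unit_vec_in_vecs[OF assms(1)], where i = "n - r" and k = r] assms by simp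
qed

lemma ord_two_prime:
  fixes p :: nat
  assumes "prime p" "p > 2"
  shows "0 < ord p 2" "[2 ^ ord p 2 = 1] (mod p)"
proof -
  have "\<not> p dvd 2" using assms(2) by (auto dest: dvd_imp_le)
  then show "0 < ord p 2"
    using prime_imp_coprime[OF assms(1)] ord_gt_0_iff by blast
  show "[2 ^ ord p 2 = 1] (mod p)" using ord_works by blast
qed

lemma eventual_period_unit_vec_dvd:
  assumes p: "prime p" "p > 2" and P: "0 < P" "eventual_period (Tmap p p) P (unit_vec p)"
  shows "p * ord p 2 dvd P"
proof -
  let ?T = "Tmap p p" and ?e = "unit_vec p"
  have p1: "1 < p" using p(2) by simp
  have e: "?e \<in> vecs p p" using unit_vec_in_vecs[OF p1] .
  have "(?T ^^ (p * ord p 2)) ?e = ?e"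
    using funpow_Tmap_order[OF p(1) e shift_invariant_self] ord_two_prime[OF p] by blast
  then have fix_P: "(?T ^^ P) ?e = ?e"
    using eventual_period_fixpoint[OF _ _ P(2)] ord_two_prime(1)[OF p] p1 by simp
  define q r where "q = P div p" and "r = P mod p"
  have P_eq: "P = p * q + r" and "r < p"
    using p1 by (simp_all add: q_def r_def)
  define y where "y = (?T ^^ r) ?e"
  have y: "y \<in> vecs p p" using funpow_Tmap_in_vecs[OF e] p1 by (simp add: y_def)
  have "?e = (?T ^^ (p * q)) y"
    using fix_P by (simp only: P_eq y_def funpow_add comp_def)
  also have "\<dots> = map (\<lambda>x. 2 ^ q * x mod p) y"
    using funpow_Tmap_prime_mult[OF p(1) y shift_invariant_self] .
  finally have e_y: "?e ! i = 2 ^ q * y ! i mod p" if "i < p" for i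
    using that y by (simp add: vecs_def)
  have "r = 0"
  proof (rule ccontr)
    assume "r \<noteq> 0"
    then have "2 ^ q mod p = 0"
      using e_y[of "p - r"] nth_funpow_Tmap_unit_vec[OF p1 _ \<open>r < p\<close>] \<open>r < p\<close>
      by (simp add: y_def nth_unit_vec)
    then have "p dvd 2" using p(1) prime_dvd_power by (auto simp: mod_eq_0_iff_dvd)
    then show False using p(2) by (auto dest: dvd_imp_le)
  qed
  then have "[2 ^ q = 1] (mod p)"
    using e_y[of 0] p1 by (simp add: y_def nth_unit_vec cong_def)
  then have "ord p 2 dvd q"
    using ord_divides by blast
  then show ?thesis
    using P_eq \<open>r = 0\<close> by simp
qed

lemma cycle_len_unit_vec:
  assumes "prime p" "p > 2"
  shows "cycle_len p p (unit_vec p) = p * ord p 2"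
proof (rule cycle_len_eqI)
  show "0 < p * ord p 2"
    using assms ord_two_prime(1)[OF assms] by simp
  show "eventual_period (Tmap p p) (p * ord p 2) (unit_vec p)"
    using funpow_Tmap_order[OF assms(1) unit_vec_in_vecs shift_invariant_self] ord_two_prime[OF assms]
      assms(2) by (intro eventual_periodI[where N = 0]) simp
qed (use eventual_period_unit_vec_dvd[OF assms] in blast)

lemma eventual_period_Tmap_prime:
  assumes "prime p" "[2 ^ q = 1] (mod p)" "xs \<in> vecs p p"
  shows "eventual_period (Tmap p p) (p * q) xs"
  using funpow_Tmap_order[OF assms(1,3) shift_invariant_self assms(2)]
  by (intro eventual_periodI[where N = 0]) simp

lemma eventual_period_Tmap_prime_double:
  assumes "prime p" "[2 ^ q = 1] (mod p)" "xs \<in> vecs p (2 * p)"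
  shows "eventual_period (Tmap p (2 * p)) (p * q) xs"
proof (rule eventual_periodI[where N = p])
  have "0 < 2 * p" using prime_gt_0_nat[OF assms(1)] by simp
  then show "(Tmap p (2 * p) ^^ (p * q)) ((Tmap p (2 * p) ^^ p) xs) = (Tmap p (2 * p) ^^ p) xs"
    using assms funpow_Tmap_in_vecs shift_invariant_funpow_Tmap_prime
    by (intro funpow_Tmap_order) auto
qed

theorem proposition7p2:
  fixes p :: nat
  assumes "prime p" and "p > 2"
  shows "Pmax p (2 * p) = Pmax p p \<and> Pmax p p = p * ord p 2"
proof -
  define Q where "Q = p * ord p 2"
  have Q: "0 < Q" and ord: "[2 ^ ord p 2 = 1] (mod p)"
    using ord_two_prime[OF assms] assms(2) by (simp_all add: Q_def)
  have e: "unit_vec p \<in> vecs p p" and len_e: "length (unit_vec p) = p"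
    using unit_vec_in_vecs assms(2) by (simp_all add: unit_vec_def)
  have cyc: "cycle_len p p (unit_vec p) = Q"
    using cycle_len_unit_vec[OF assms] by (simp add: Q_def)
  have "Pmax p p = Q"
    using eventual_period_Tmap_prime[OF assms(1) ord] by (intro Pmax_eqI[OF Q _ e cyc]) (simp add: Q_def)
  moreover have "Pmax p (2 * p) = Q"
  proof (rule Pmax_eqI[OF Q])
    show "\<forall>b\<in>vecs p (2 * p). eventual_period (Tmap p (2 * p)) Q b"
      using eventual_period_Tmap_prime_double[OF assms(1) ord] by (simp add: Q_def)
    show "unit_vec p @ unit_vec p \<in> vecs p (2 * p)"
      using e by (auto simp: vecs_def)
    show "cycle_len p (2 * p) (unit_vec p @ unit_vec p) = Q"
      using cycle_len_append_self[OF len_e] cyc assms(2) by simp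
  qed
  ultimately show ?thesis by (simp add: Q_def)
qed

end
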